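(* Let $\epsilon\in(0,1]$, let $G$ be a finite group, $\alpha$ an automorphism of $G$, and $S:=\{g\in G:\alpha(g)=g^{-1}\}$. If $s,t\in S$ satisfy $|sS\cap tS|\geq\epsilon|G|$, then $|C_G(st^{-1})|\geq\epsilon|G|$, where $C_G(x)$ denotes the centralizer of $x$ in $G$.
   Context: For $s\in G$ and $S\subseteq G$, $sS=\{sx:x\in S\}$ is the left translate. *)

theory Defs
  imports Complex_Main "HOL-Algebra.Coset"
begin

definition centralizer :: "('a, 'b) monoid_scheme \<Rightarrow> 'a \<Rightarrow> 'a set" where
  "centralizer G x = {g \<in> carrier G. g \<otimes>\<^bsub>G\<^esub> x = x \<otimes>\<^bsub>G\<^esub> g}"

end

theory Submission
  imports Defs
begin

text \<open>If \<open>\<alpha>\<close> inverts \<open>s\<close> and \<open>a\<close>, then for \<open>x = s a\<close> we get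
  \<open>\<alpha>(x) = s\<inverse> a\<inverse> = s\<inverse> x\<inverse> s\<close>. So if \<open>x \<in> sS \<inter> tS\<close>, then
  \<open>s\<inverse> x\<inverse> s = t\<inverse> x\<inverse> t\<close>, i.e. \<open>x\<inverse>\<close> commutes with \<open>s t\<inverse>\<close>. Inversion thus embeds
  \<open>sS \<inter> tS\<close> into \<open>C\<^sub>G(s t\<inverse>)\<close>.\<close>

lemma (in group) conj_eq_imp_commutes:
  assumes "s \<in> carrier G" "t \<in> carrier G" "y \<in> carrier G"
    and "inv s \<otimes> y \<otimes> s = inv t \<otimes> y \<otimes> t"
  shows "y \<otimes> (s \<otimes> inv t) = (s \<otimes> inv t) \<otimes> y"
proof -
  have "y \<otimes> (s \<otimes> inv t) = s \<otimes> (inv s \<otimes> y \<otimes> s) \<otimes> inv t"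
    using assms(1-3) by (simp add: m_assoc flip: m_assoc[of s "inv s"])
  also have "\<dots> = s \<otimes> (inv t \<otimes> y \<otimes> t) \<otimes> inv t"
    using assms(4) by simp
  also have "\<dots> = (s \<otimes> inv t) \<otimes> y"
    using assms(1-3) by (simp add: m_assoc)
  finally show ?thesis .
qed

lemma (in group) hom_mult_of_inverted:
  assumes "\<alpha> \<in> hom G G" "s \<in> carrier G" "a \<in> carrier G"
    and "\<alpha> s = inv s" "\<alpha> a = inv a"
  shows "\<alpha> (s \<otimes> a) = inv s \<otimes> inv (s \<otimes> a) \<otimes> s"
proof -
  have "\<alpha> (s \<otimes> a) = inv s \<otimes> inv a"
    using assms by (simp add: hom_mult)
  also have "inv a = inv (s \<otimes> a) \<otimes> s"
    using assms(2,3) by (simp add: inv_mult_group m_assoc)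
  finally show ?thesis
    using assms(2,3) by (simp add: m_assoc)
qed

lemma (in group) inv_mem_centralizer_of_l_cosets_inter:
  assumes "\<alpha> \<in> hom G G" and S: "S \<subseteq> {g \<in> carrier G. \<alpha> g = inv g}"
    and "s \<in> S" "t \<in> S" "x \<in> (s <# S) \<inter> (t <# S)"
  shows "inv x \<in> centralizer G (s \<otimes> inv t)"
proof -
  obtain a b where a: "a \<in> S" "x = s \<otimes> a" and b: "b \<in> S" "x = t \<otimes> b"
    using assms(5) unfolding l_coset_def by auto
  have s: "s \<in> carrier G" "\<alpha> s = inv s" and t: "t \<in> carrier G" "\<alpha> t = inv t"
    using S assms(3,4) by auto
  have x: "x \<in> carrier G"
    using S a s by auto
  have "inv s \<otimes> inv x \<otimes> s = \<alpha> x"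
    using hom_mult_of_inverted[OF assms(1) s(1) _ s(2)] S a by auto
  also have "\<dots> = inv t \<otimes> inv x \<otimes> t"
    using hom_mult_of_inverted[OF assms(1) t(1) _ t(2)] S b by auto
  finally have "inv x \<otimes> (s \<otimes> inv t) = (s \<otimes> inv t) \<otimes> inv x"
    using conj_eq_imp_commutes s(1) t(1) x by simp
  then show ?thesis
    using x by (simp add: centralizer_def)
qed

lemma (in group) card_l_cosets_inter_le_card_centralizer:
  assumes "finite (carrier G)" "\<alpha> \<in> hom G G"
    and S: "S \<subseteq> {g \<in> carrier G. \<alpha> g = inv g}" and "s \<in> S" "t \<in> S"
  shows "card ((s <# S) \<inter> (t <# S)) \<le> card (centralizer G (s \<otimes> inv t))"
proof -
  let ?X = "(s <# S) \<inter> (t <# S)"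
  have "?X \<subseteq> carrier G"
    using S assms(4) l_coset_subset_G by blast
  then have "inj_on (\<lambda>x. inv x) ?X"
    by (metis (mono_tags, lifting) inj_onI inv_inv subsetD)
  then have "card ?X = card ((\<lambda>x. inv x) ` ?X)"
    by (simp add: card_image)
  also have "\<dots> \<le> card (centralizer G (s \<otimes> inv t))"
    using inv_mem_centralizer_of_l_cosets_inter[OF assms(2) S assms(4,5)] assms(1)
    by (intro card_mono) (auto simp: centralizer_def intro: finite_subset)
  finally show ?thesis .
qed

theorem lemma5:
  fixes G (structure) and \<alpha> :: "'a \<Rightarrow> 'a" and \<epsilon> :: real and S :: "'a set" and s t :: 'a
  assumes "group G" and "finite (carrier G)"
    and "\<alpha> \<in> iso G G"
    and "0 < \<epsilon>" and "\<epsilon> \<le> 1"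
    and "S = {g \<in> carrier G. \<alpha> g = inv g}"
    and "s \<in> S" and "t \<in> S"
    and "real (card ((s <# S) \<inter> (t <# S))) \<ge> \<epsilon> * real (card (carrier G))"
  shows "real (card (centralizer G (s \<otimes> inv t))) \<ge> \<epsilon> * real (card (carrier G))"
proof -
  have "card ((s <# S) \<inter> (t <# S)) \<le> card (centralizer G (s \<otimes> inv t))"
    using group.card_l_cosets_inter_le_card_centralizer[OF assms(1,2)] assms(3,6-8)
    by (auto simp: iso_def)
  with assms(9) show ?thesis
    by linarith
qed

end
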